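(* Let $\Sigma$ be a set of constant symbols with $\star\notin\Sigma$, let $W=c_1\cdots c_n$ be a word over $\Sigma$, and let $p=(p_0,\dots,p_n)$ and $q=(q_0,\dots,q_n)$ be two tuples of pairwise distinct constants of $\mathbf P$. For every observation $O\in\mathrm{Matr}_\Sigma(\mathcal O)$, the wiring $O\bar W_p$ is nilpotent if and only if $O\bar W_q$ is nilpotent.
   Context: Terms: first-order terms built from an infinite set of variables, a binary function symbol $\bullet$ written infix (not associative; by convention right-associating, $t\bullet u\bullet v:=t\bullet(u\bullet v)$), infinitely many constant symbols including a distinguished constant $\star$, and for each $n\ge1$ at least one $n$-ary function symbol. $\mathrm{var}(t)$ is the set of variables of $t$. The height of an occurrence of a variable in $t$ is its distance from the root of the tree of $t$. A renaming is a bijective substitution mapping variables to variables. A flow is a pair of terms written $t\leftarrow u$ with $\mathrm{var}(t)\subseteq\mathrm{var}(u)$, considered up to renaming. The product of flows $u\leftarrow v$ and $t\leftarrow w$ (representatives chosen with disjoint variable sets) is defined iff $v$ and $t$ are unifiable, and then equals $u\theta\leftarrow w\theta$ with $\theta$ a most general unifier of $v,t$. A wiring is a finite set of flows, written as a formal sum, with $0$ the empty wiring; product $FG=\{fg: f\in F,g\in G, fg\text{ defined}\}$, $F^n$ the $n$-fold product. $F$ is nilpotent if $F^n=0$ for some $n\in\mathbb N$. A flow $t\leftarrow u$ is balanced if for every variable $x$, all occurrences of $x$ in $t$ and in $u$ have the same height; $\mathcal B$ is the set of wirings all of whose flows are balanced. A semiring is a set of wirings containing $0$ and closed under finite sums (unions)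 and products. Tensor product of flows (variables renamed apart): $(u\leftarrow v)\otimes(t\leftarrow w):=u\bullet t\leftarrow v\bullet w$; extended to wirings by $(\sum_i f_i)\otimes(\sum_j g_j)=\sum_{i,j}f_i\otimes g_j$, and to semirings by $\mathcal A\otimes\mathcal B=\{\sum_i F_i\otimes G_i: F_i\in\mathcal A,G_i\in\mathcal B\}$, right-associating. For a set $E$ of closed terms, $\mathcal C(E)=\{\sum_i t_i\leftarrow u_i: t_i,u_i\in E\}$. For a set of symbols $\mathbf S$ and semiring $\mathcal A$, $\mathcal R_{\mathbf S}(\mathcal A)$ is the set of wirings of $\mathcal A$ not using symbols of $\mathbf S$. Fix disjoint infinite sets of constants $\mathbf P$ (position constants) and $\mathbf S$ (states), a unary function symbol $\mathrm M$, and constants $\mathrm L,\mathrm R$. The observation semiring is $\mathcal O:=\mathcal C(\mathbf S)\otimes\mathcal R_{\mathbf P}(\mathcal B)$. For a set of constants $\Sigma$ and semiring $\mathcal A$, $\mathrm{Matr}_\Sigma(\mathcal A):=\mathcal C(\Sigma\cup\{\star\})\otimes\mathcal C(\{\mathrm L,\mathrm R\})\otimes\mathcal A$. An observation over $\Sigma$ is any element of $\mathrm{Matr}_\Sigma(\mathcal O)$. Word representation: write $t\rightleftarrows u$ for $t\leftarrow u+u\leftarrow t$. For $W=c_1\cdots c_n$ over $\Sigma$ and pairwise distinct $p=(p_0,\dots,p_n)\in\mathbf P^{n+1}$, set $p_{n+1}=p_0$, $c_0=c_{n+1}=\star$, and, with $x,y$ variables, $\bar W_p=\sum_{i=0}^n\big(c_i\bullet\mathrm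 L\bullet x\bullet y\bullet\mathrm M(p_i)\ \rightleftarrows\ c_{i+1}\bullet\mathrm R\bullet x\bullet y\bullet\mathrm M(p_{i+1})\big)$. *)

theory Defs
  imports Main
begin

text \<open>Constant symbols: the distinguished constant Star, the constants L and R,
  position constants CP k (the set P), state constants CS k (the set S), and
  infinitely many further constants CO k.\<close>
datatype const = Star | CL | CR | CP nat | CS nat | CO nat

text \<open>A function
  symbol applied to a list of arguments is identified together with its arity
  (the length of the list), so for every n there are infinitely many n-ary symbols.\<close>
datatype fsym = FM | FS nat

datatype trm = Var nat | Cst const | Bul trm trm | Fn fsym "trm list"

definition PosSet :: "const set" where "PosSet = range CP"
definition StateSet :: "const set" where "StateSet = range CS"

fun subst :: "(nat \<Rightarrow> trm) \<Rightarrow> trm \<Rightarrow> trm" where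
  "subst \<sigma> (Var x) = \<sigma> x"
| "subst \<sigma> (Cst c) = Cst c"
| "subst \<sigma> (Bul a b) = Bul (subst \<sigma> a) (subst \<sigma> b)"
| "subst \<sigma> (Fn f ts) = Fn f (map (subst \<sigma>) ts)"

fun vars :: "trm \<Rightarrow> nat set" where
  "vars (Var x) = {x}"
| "vars (Cst c) = {}"
| "vars (Bul a b) = vars a \<union> vars b"
| "vars (Fn f ts) = \<Union> (set (map vars ts))"

fun varh :: "nat \<Rightarrow> trm \<Rightarrow> nat set" where
  "varh x (Var y) = (if x = y then {0} else {})"
| "varh x (Cst c) = {}"
| "varh x (Bul a b) = Suc ` (varh x a \<union> varh x b)"
| "varh x (Fn f ts) = Suc ` \<Union> (set (map (varh x) ts))"

fun usesP :: "trm \<Rightarrow> bool" where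
  "usesP (Var x) = False"
| "usesP (Cst c) = (c \<in> PosSet)"
| "usesP (Bul a b) = (usesP a \<or> usesP b)"
| "usesP (Fn f ts) = list_ex usesP ts"

definition renaming :: "(nat \<Rightarrow> trm) \<Rightarrow> bool" where
  "renaming \<rho> \<longleftrightarrow> (\<exists>\<pi>. bij \<pi> \<and> \<rho> = Var \<circ> \<pi>)"

definition is_mgu :: "(nat \<Rightarrow> trm) \<Rightarrow> trm \<Rightarrow> trm \<Rightarrow> bool" where
  "is_mgu \<theta> a b \<longleftrightarrow> subst \<theta> a = subst \<theta> b \<and>
     (\<forall>\<sigma>. subst \<sigma> a = subst \<sigma> b \<longrightarrow> (\<exists>\<tau>. \<forall>x. \<sigma> x = subst \<tau> (\<theta> x)))"

text \<open>A flow representative (t, u) stands for t \<leftarrow> u. A flow is the class of a valid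
  representative up to renaming. A wiring is a finite set of flows.\<close>
type_synonym rep = "trm \<times> trm"
type_synonym flow = "rep set"
type_synonym wiring = "flow set"

definition valid_rep :: "rep \<Rightarrow> bool" where
  "valid_rep r \<longleftrightarrow> vars (fst r) \<subseteq> vars (snd r)"

definition cls :: "rep \<Rightarrow> flow" where
  "cls r = {(subst \<rho> (fst r), subst \<rho> (snd r)) | \<rho>. renaming \<rho>}"

definition is_flow :: "flow \<Rightarrow> bool" where
  "is_flow f \<longleftrightarrow> (\<exists>r. valid_rep r \<and> f = cls r)"

definition is_wiring :: "wiring \<Rightarrow> bool" where
  "is_wiring F \<longleftrightarrow> finite F \<and> (\<forall>f\<in>F. is_flow f)"

definition rvars :: "rep \<Rightarrow> nat set" where
  "rvars r = vars (fst r) \<union> vars (snd r)"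

definition wprod :: "wiring \<Rightarrow> wiring \<Rightarrow> wiring" where
  "wprod F G = {cls (subst \<theta> u, subst \<theta> w) | f g u v t w \<theta>.
      f \<in> F \<and> g \<in> G \<and> (u, v) \<in> f \<and> (t, w) \<in> g \<and>
      rvars (u, v) \<inter> rvars (t, w) = {} \<and> is_mgu \<theta> v t}"

text \<open>wpow F n is the (n+1)-fold product F^(n+1).\<close>
primrec wpow :: "wiring \<Rightarrow> nat \<Rightarrow> wiring" where
  "wpow F 0 = F"
| "wpow F (Suc n) = wprod (wpow F n) F"

definition nilpotent :: "wiring \<Rightarrow> bool" where
  "nilpotent F \<longleftrightarrow> (\<exists>n. wpow F n = {})"

definition balanced :: "rep \<Rightarrow> bool" where
  "balanced r \<longleftrightarrow> (\<forall>x. \<exists>h. varh x (fst r) \<union> varh x (snd r) \<subseteq> {h})"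

definition Bal :: "wiring set" where
  "Bal = {F. is_wiring F \<and> (\<forall>f\<in>F. \<forall>r\<in>f. balanced r)}"

definition wtensor :: "wiring \<Rightarrow> wiring \<Rightarrow> wiring" where
  "wtensor F G = {cls (Bul u t, Bul v w) | f g u v t w.
      f \<in> F \<and> g \<in> G \<and> (u, v) \<in> f \<and> (t, w) \<in> g \<and> rvars (u, v) \<inter> rvars (t, w) = {}}"

text \<open>Tensor product of semirings: finite sums of tensors.\<close>
definition stensor :: "wiring set \<Rightarrow> wiring set \<Rightarrow> wiring set" where
  "stensor A B = {\<Union>FG\<in>set ps. wtensor (fst FG) (snd FG) | ps. set ps \<subseteq> A \<times> B}"

definition Cl :: "trm set \<Rightarrow> wiring set" where
  "Cl E = {F. finite F \<and> (\<forall>f\<in>F. \<exists>t\<in>E. \<exists>u\<in>E. f = cls (t, u))}"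

definition RP :: "wiring set \<Rightarrow> wiring set" where
  "RP A = {F \<in> A. \<forall>f\<in>F. \<forall>r\<in>f. \<not> usesP (fst r) \<and> \<not> usesP (snd r)}"

definition Obs :: "wiring set" where
  "Obs = stensor (Cl (Cst ` StateSet)) (RP Bal)"

definition Matr :: "const set \<Rightarrow> wiring set \<Rightarrow> wiring set" where
  "Matr \<Sigma> A = stensor (Cl (Cst ` (\<Sigma> \<union> {Star}))) (stensor (Cl (Cst ` {CL, CR})) A)"

definition wpt :: "const \<Rightarrow> const \<Rightarrow> const \<Rightarrow> trm" where
  "wpt c d pos = Bul (Cst c) (Bul (Cst d) (Bul (Var 0) (Bul (Var 1) (Fn FM [Cst pos]))))"

text \<open>W is the list [c_1,...,c_n]; p is the list [p_0,...,p_n] of indices of the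
  position constants CP (p ! i).\<close>
definition letter :: "const list \<Rightarrow> nat \<Rightarrow> const" where
  "letter W i = (if 1 \<le> i \<and> i \<le> length W then W ! (i - 1) else Star)"

definition wordrep :: "const list \<Rightarrow> nat list \<Rightarrow> wiring" where
  "wordrep W p = (\<Union>i\<in>{0..length W}.
     (let a = wpt (letter W i) CL (CP (p ! i));
          b = wpt (letter W (Suc i)) CR (CP (p ! (if i = length W then 0 else Suc i)))
      in {cls (a, b), cls (b, a)}))"

end

theory Submission
  imports Defs "HOL-Combinatorics.Transposition"
begin

(* Position constants only occur in a word representation inside
   the argument M(p_i), i.e. strictly below the first letter of the flow; an observation
   of Matr_Sigma(O) never uses position constants except possibly in its head letter
   (taken from Sigma, which may a priori meet P).  So let pi be a permutation of the
   naturals with pi(p_i) = q_i and let it act on the constants CP k of every term,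
   except on the head constant of terms of the shape c . r ("headed" terms).
   This action commutes with substitution and transports most general unifiers, hence
   it maps a product of headed wirings into the product of the images, and by induction
   every power (O W_p)^n into (O W_q)^n.  It fixes O and sends W_p onto W_q, so
   (O W_q)^n = 0 forces (O W_p)^n = 0; the converse uses the inverse permutation. *)

fun cren :: "(const \<Rightarrow> const) \<Rightarrow> trm \<Rightarrow> trm" where
  "cren g (Var x) = Var x"
| "cren g (Cst c) = Cst (g c)"
| "cren g (Bul a b) = Bul (cren g a) (cren g b)"
| "cren g (Fn f ts) = Fn f (map (cren g) ts)"

lemma cren_subst: "cren g (subst \<theta> t) = subst (cren g \<circ> \<theta>) (cren g t)"
  by (induction t) auto

lemma cren_cren: "(\<And>c. h (g c) = c) \<Longrightarrow> cren h (cren g t) = t"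
  by (induction t) (auto intro: map_idI)

lemma vars_cren: "vars (cren g t) = vars t"
  by (induction t) auto

lemma cren_fix: "\<not> usesP t \<Longrightarrow> (\<And>c. c \<notin> PosSet \<Longrightarrow> g c = c) \<Longrightarrow> cren g t = t"
  by (induction t) (auto intro: map_idI simp: list_ex_iff)

lemma usesP_subst_renaming: "renaming \<rho> \<Longrightarrow> usesP (subst \<rho> t) = usesP t"
  by (induction t) (auto simp: renaming_def list_ex_iff)

lemma cren_comp_renaming: "renaming \<rho> \<Longrightarrow> cren g \<circ> \<rho> = \<rho>"
  by (auto simp: renaming_def)

text \<open>A term is headed if it has the form c . r for a constant c; all terms occurring in
  observations and word representations are headed.\<close>
definition headed :: "trm \<Rightarrow> bool" where
  "headed t \<longleftrightarrow> (\<exists>c r. t = Bul (Cst c) r)"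

fun tail_ren :: "(const \<Rightarrow> const) \<Rightarrow> trm \<Rightarrow> trm" where
  "tail_ren g (Bul (Cst c) r) = Bul (Cst c) (cren g r)"
| "tail_ren g t = cren g t"

lemma headed_subst: "headed t \<Longrightarrow> headed (subst \<theta> t)"
  by (auto simp: headed_def)

lemma tail_ren_subst: "headed t \<Longrightarrow> tail_ren g (subst \<theta> t) = subst (cren g \<circ> \<theta>) (tail_ren g t)"
  by (auto simp: headed_def cren_subst)

lemma tail_ren_tail_ren: "headed t \<Longrightarrow> (\<And>c. h (g c) = c) \<Longrightarrow> tail_ren h (tail_ren g t) = t"
  by (auto simp: headed_def cren_cren)

lemma vars_tail_ren: "headed t \<Longrightarrow> vars (tail_ren g t) = vars t"
  by (auto simp: headed_def vars_cren)

lemma is_mgu_tail_ren: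
  assumes gh: "\<And>c. g (h c) = c" and hg: "\<And>c. h (g c) = c"
    and ha: "headed a" and hb: "headed b" and mgu: "is_mgu \<theta> a b"
  shows "is_mgu (cren g \<circ> \<theta>) (tail_ren g a) (tail_ren g b)"
  unfolding is_mgu_def
proof (intro conjI allI impI)
  show "subst (cren g \<circ> \<theta>) (tail_ren g a) = subst (cren g \<circ> \<theta>) (tail_ren g b)"
    using mgu ha hb by (metis is_mgu_def tail_ren_subst)
next
  fix \<sigma> assume unif: "subst \<sigma> (tail_ren g a) = subst \<sigma> (tail_ren g b)"
  define \<sigma>' where "\<sigma>' = cren h \<circ> \<sigma>"
  have cancel: "cren g \<circ> \<sigma>' = \<sigma>"
    unfolding \<sigma>'_def using cren_cren[of g h] gh by auto
  have "tail_ren g (subst \<sigma>' a) = tail_ren g (subst \<sigma>' b)"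
    using unif cancel tail_ren_subst[OF ha] tail_ren_subst[OF hb] by metis
  then have "subst \<sigma>' a = subst \<sigma>' b"
    by (metis tail_ren_tail_ren headed_subst ha hb hg)
  then obtain \<tau> where \<tau>: "\<And>x. \<sigma>' x = subst \<tau> (\<theta> x)"
    using mgu unfolding is_mgu_def by blast
  have "\<sigma> x = subst (cren g \<circ> \<tau>) ((cren g \<circ> \<theta>) x)" for x
  proof -
    have "\<sigma> x = cren g (\<sigma>' x)" using cancel by (metis comp_apply)
    also have "\<dots> = subst (cren g \<circ> \<tau>) ((cren g \<circ> \<theta>) x)" using \<tau> cren_subst by simp
    finally show ?thesis .
  qed
  then show "\<exists>\<tau>. \<forall>x. \<sigma> x = subst \<tau> ((cren g \<circ> \<theta>) x)" by blast
qed

definition flow_map :: "(const \<Rightarrow> const) \<Rightarrow> flow \<Rightarrow> flow" where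
  "flow_map g f = (\<lambda>(a, b). (tail_ren g a, tail_ren g b)) ` f"

definition headed_wiring :: "wiring \<Rightarrow> bool" where
  "headed_wiring F \<longleftrightarrow> (\<forall>f\<in>F. \<forall>(a, b)\<in>f. headed a \<and> headed b)"

lemma flow_map_cls:
  assumes ha: "headed a" and hb: "headed b"
  shows "flow_map g (cls (a, b)) = cls (tail_ren g a, tail_ren g b)"
proof
  show "flow_map g (cls (a, b)) \<subseteq> cls (tail_ren g a, tail_ren g b)"
    unfolding flow_map_def cls_def using ha hb by (auto simp: tail_ren_subst cren_comp_renaming)
  show "cls (tail_ren g a, tail_ren g b) \<subseteq> flow_map g (cls (a, b))"
  proof
    fix z assume "z \<in> cls (tail_ren g a, tail_ren g b)"
    then obtain \<rho> where \<rho>: "renaming \<rho>"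
      and z: "z = (subst \<rho> (tail_ren g a), subst \<rho> (tail_ren g b))"
      unfolding cls_def by auto
    have "z = (\<lambda>(a, b). (tail_ren g a, tail_ren g b)) (subst \<rho> a, subst \<rho> b)"
      using z \<rho> ha hb by (simp add: tail_ren_subst cren_comp_renaming)
    moreover have "(subst \<rho> a, subst \<rho> b) \<in> cls (a, b)" using \<rho> unfolding cls_def by auto
    ultimately show "z \<in> flow_map g (cls (a, b))" unfolding flow_map_def by blast
  qed
qed

lemma headed_cls: "headed a \<Longrightarrow> headed b \<Longrightarrow> (x, y) \<in> cls (a, b) \<Longrightarrow> headed x \<and> headed y"
  unfolding cls_def by (auto intro: headed_subst)

lemma headed_wiring_wprod: "headed_wiring F \<Longrightarrow> headed_wiring G \<Longrightarrow> headed_wiring (wprod F G)"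
  unfolding headed_wiring_def wprod_def
  by (clarsimp, metis (no_types, lifting) case_prodD headed_cls headed_subst)

lemma headed_wiring_wpow: "headed_wiring F \<Longrightarrow> headed_wiring (wpow F n)"
  by (induction n) (auto intro: headed_wiring_wprod)

lemma wprod_mono: "F \<subseteq> F' \<Longrightarrow> G \<subseteq> G' \<Longrightarrow> wprod F G \<subseteq> wprod F' G'"
  unfolding wprod_def by blast

lemma wpow_mono: "F \<subseteq> F' \<Longrightarrow> wpow F n \<subseteq> wpow F' n"
  by (induction n) (auto intro: wprod_mono[THEN subsetD])

lemma flow_map_wprod:
  assumes gh: "\<And>c. g (h c) = c" and hg: "\<And>c. h (g c) = c"
    and hF: "headed_wiring F" and hG: "headed_wiring G"
  shows "flow_map g ` wprod F G \<subseteq> wprod (flow_map g ` F) (flow_map g ` G)"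
proof
  fix x assume "x \<in> flow_map g ` wprod F G"
  then obtain f k u v t w \<theta> where f: "f \<in> F" and k: "k \<in> G"
    and uv: "(u, v) \<in> f" and tw: "(t, w) \<in> k"
    and disj: "rvars (u, v) \<inter> rvars (t, w) = {}" and mgu: "is_mgu \<theta> v t"
    and x: "x = flow_map g (cls (subst \<theta> u, subst \<theta> w))"
    unfolding wprod_def by blast
  have hd: "headed u" "headed v" "headed t" "headed w"
    using hF hG f k uv tw unfolding headed_wiring_def by fastforce+
  have "x = cls (subst (cren g \<circ> \<theta>) (tail_ren g u), subst (cren g \<circ> \<theta>) (tail_ren g w))"
    using x hd by (simp add: flow_map_cls headed_subst tail_ren_subst)
  moreover have "flow_map g f \<in> flow_map g ` F" "flow_map g k \<in> flow_map g ` G"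
    using f k by auto
  moreover have "(tail_ren g u, tail_ren g v) \<in> flow_map g f"
    "(tail_ren g t, tail_ren g w) \<in> flow_map g k"
    using uv tw unfolding flow_map_def by (auto intro: rev_image_eqI)
  moreover have "rvars (tail_ren g u, tail_ren g v) \<inter> rvars (tail_ren g t, tail_ren g w) = {}"
    using disj hd by (simp add: rvars_def vars_tail_ren)
  moreover have "is_mgu (cren g \<circ> \<theta>) (tail_ren g v) (tail_ren g t)"
    using is_mgu_tail_ren[OF gh hg hd(2,3) mgu] .
  ultimately show "x \<in> wprod (flow_map g ` F) (flow_map g ` G)"
    unfolding wprod_def by blast
qed

lemma flow_map_wpow:
  assumes gh: "\<And>c. g (h c) = c" and hg: "\<And>c. h (g c) = c" and hF: "headed_wiring F"
  shows "flow_map g ` wpow F n \<subseteq> wpow (flow_map g ` F) n"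
proof (induction n)
  case 0 then show ?case by simp
next
  case (Suc n)
  have "flow_map g ` wpow F (Suc n) \<subseteq> wprod (flow_map g ` wpow F n) (flow_map g ` F)"
    using flow_map_wprod[OF gh hg headed_wiring_wpow[OF hF] hF] by simp
  also have "\<dots> \<subseteq> wprod (wpow (flow_map g ` F) n) (flow_map g ` F)"
    using wprod_mono[OF Suc.IH subset_refl] .
  finally show ?case by simp
qed

lemma nilpotent_transfer:
  assumes gh: "\<And>c. g (h c) = c" and hg: "\<And>c. h (g c) = c"
    and hOb: "headed_wiring Ob" and hW: "headed_wiring W"
    and Ob_fixed: "flow_map g ` Ob \<subseteq> Ob" and W_image: "flow_map g ` W \<subseteq> W'"
    and nil: "nilpotent (wprod Ob W')"
  shows "nilpotent (wprod Ob W)"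
proof -
  obtain n where n: "wpow (wprod Ob W') n = {}" using nil unfolding nilpotent_def by blast
  have "flow_map g ` wprod Ob W \<subseteq> wprod (flow_map g ` Ob) (flow_map g ` W)"
    using flow_map_wprod[OF gh hg hOb hW] .
  also have "\<dots> \<subseteq> wprod Ob W'" using Ob_fixed W_image by (rule wprod_mono)
  finally have one: "flow_map g ` wprod Ob W \<subseteq> wprod Ob W'" .
  have "flow_map g ` wpow (wprod Ob W) n \<subseteq> wpow (wprod Ob W') n"
    using flow_map_wpow[OF gh hg headed_wiring_wprod[OF hOb hW]] wpow_mono[OF one]
    by (rule subset_trans)
  then have "wpow (wprod Ob W) n = {}" using n by simp
  then show ?thesis unfolding nilpotent_def by blast
qed

definition P_free :: "wiring \<Rightarrow> bool" where
  "P_free F \<longleftrightarrow> (\<forall>f\<in>F. \<forall>(a, b)\<in>f. \<not> usesP a \<and> \<not> usesP b)"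

lemma cls_memD: "(a, b) \<in> cls (x, y) \<Longrightarrow> \<exists>\<rho>. renaming \<rho> \<and> a = subst \<rho> x \<and> b = subst \<rho> y"
  unfolding cls_def by auto

lemma stensor_reps:
  assumes "F \<in> stensor A B" "f \<in> F" "(a, b) \<in> f"
  shows "\<exists>F1\<in>A. \<exists>G\<in>B. \<exists>f1\<in>F1. \<exists>g\<in>G. \<exists>\<rho> u v t w. (u, v) \<in> f1 \<and> (t, w) \<in> g \<and>
           renaming \<rho> \<and> a = Bul (subst \<rho> u) (subst \<rho> t) \<and> b = Bul (subst \<rho> v) (subst \<rho> w)"
proof -
  obtain ps where F: "F = (\<Union>FG\<in>set ps. wtensor (fst FG) (snd FG))" and ps: "set ps \<subseteq> A \<times> B"
    using assms(1) unfolding stensor_def by blast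
  then obtain FG where FG: "FG \<in> set ps" and "f \<in> wtensor (fst FG) (snd FG)"
    using assms(2) by blast
  then obtain f1 g u v t w where f: "f = cls (Bul u t, Bul v w)" and "f1 \<in> fst FG" "g \<in> snd FG"
    "(u, v) \<in> f1" "(t, w) \<in> g"
    unfolding wtensor_def by blast
  moreover obtain \<rho> where "renaming \<rho>" "a = Bul (subst \<rho> u) (subst \<rho> t)"
    "b = Bul (subst \<rho> v) (subst \<rho> w)"
    using cls_memD[of a b "Bul u t" "Bul v w"] assms(3) f by auto
  moreover have "fst FG \<in> A" "snd FG \<in> B" using FG ps by auto
  ultimately show ?thesis by blast
qed

lemma Cl_reps:
  assumes "F \<in> Cl (Cst ` C)" "f \<in> F" "(a, b) \<in> f"
  shows "\<exists>c\<in>C. \<exists>c'\<in>C. a = Cst c \<and> b = Cst c'"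
proof -
  obtain c c' where "c \<in> C" "c' \<in> C" and "f = cls (Cst c, Cst c')"
    using assms(1,2) unfolding Cl_def by auto
  then show ?thesis using cls_memD[of a b] assms(3) by fastforce
qed

lemma stensor_Cl_P_free:
  assumes F: "F \<in> stensor (Cl (Cst ` C)) A" and C: "C \<inter> PosSet = {}"
    and A: "\<And>G. G \<in> A \<Longrightarrow> P_free G"
  shows "P_free F"
  unfolding P_free_def
proof (intro ballI, clarify)
  fix f a b assume f: "f \<in> F" and ab: "(a, b) \<in> f"
  obtain F1 G f1 g \<rho> u v t w where "F1 \<in> Cl (Cst ` C)" "G \<in> A" "f1 \<in> F1" "g \<in> G"
    "(u, v) \<in> f1" "(t, w) \<in> g" and \<rho>: "renaming \<rho>"
    and a: "a = Bul (subst \<rho> u) (subst \<rho> t)" and b: "b = Bul (subst \<rho> v) (subst \<rho> w)"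
    using stensor_reps[OF F f ab] by blast
  then have "\<not> usesP u" "\<not> usesP v" "\<not> usesP t" "\<not> usesP w"
    using Cl_reps C A unfolding P_free_def by fastforce+
  then show "\<not> usesP a \<and> \<not> usesP b"
    using a b by (simp add: usesP_subst_renaming[OF \<rho>])
qed

lemma Obs_P_free:
  assumes "F \<in> Obs" shows "P_free F"
proof -
  have "P_free G" if "G \<in> RP Bal" for G
    using that unfolding RP_def P_free_def by fastforce
  then show ?thesis
    using stensor_Cl_P_free assms unfolding Obs_def by (auto simp: StateSet_def PosSet_def)
qed

text \<open>Matrices over a P-free semiring are headed, with P-free tails: position constants
  may only occur as the head letter (coming from Sigma).\<close>
lemma Matr_reps:
  assumes Ob: "Ob \<in> Matr \<Sigma> A" and A: "\<And>G. G \<in> A \<Longrightarrow> P_free G"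
    and f: "f \<in> Ob" and ab: "(a, b) \<in> f"
  shows "(\<exists>c r. a = Bul (Cst c) r \<and> \<not> usesP r) \<and> (\<exists>c r. b = Bul (Cst c) r \<and> \<not> usesP r)"
proof -
  obtain F1 G f1 g \<rho> u v t w where "F1 \<in> Cl (Cst ` (\<Sigma> \<union> {Star}))"
    and G: "G \<in> stensor (Cl (Cst ` {CL, CR})) A" and "f1 \<in> F1" and g: "g \<in> G"
    and "(u, v) \<in> f1" and tw: "(t, w) \<in> g" and \<rho>: "renaming \<rho>"
    and a: "a = Bul (subst \<rho> u) (subst \<rho> t)" and b: "b = Bul (subst \<rho> v) (subst \<rho> w)"
    using stensor_reps[OF Ob[unfolded Matr_def] f ab] by blast
  then obtain c c' where "u = Cst c" "v = Cst c'" using Cl_reps by blast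
  moreover have "P_free G"
    using stensor_Cl_P_free[OF G _ A] by (auto simp: PosSet_def)
  then have "\<not> usesP t" "\<not> usesP w" using g tw unfolding P_free_def by fastforce+
  ultimately show ?thesis using a b by (simp add: usesP_subst_renaming[OF \<rho>])
qed

lemma Matr_headed: "Ob \<in> Matr \<Sigma> Obs \<Longrightarrow> headed_wiring Ob"
  unfolding headed_wiring_def headed_def using Matr_reps Obs_P_free by fast

lemma Matr_flow_map_fixed:
  assumes Ob: "Ob \<in> Matr \<Sigma> Obs" and g: "\<And>c. c \<notin> PosSet \<Longrightarrow> g c = c"
  shows "flow_map g ` Ob = Ob"
proof -
  have "flow_map g f = f" if f: "f \<in> Ob" for f
  proof -
    have "(\<lambda>(a, b). (tail_ren g a, tail_ren g b)) z = z" if z: "z \<in> f" for z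
      using Matr_reps[OF Ob Obs_P_free f, of "fst z" "snd z"] z g by (cases z) (auto simp: cren_fix)
    then show ?thesis unfolding flow_map_def by simp
  qed
  then show ?thesis by simp
qed

fun pos_map :: "(nat \<Rightarrow> nat) \<Rightarrow> const \<Rightarrow> const" where
  "pos_map \<pi> (CP k) = CP (\<pi> k)"
| "pos_map \<pi> c = c"

lemma pos_map_fix: "c \<notin> PosSet \<Longrightarrow> pos_map \<pi> c = c"
  by (cases c) (auto simp: PosSet_def)

lemma pos_map_inverse: "(\<And>k. \<pi>' (\<pi> k) = k) \<Longrightarrow> pos_map \<pi>' (pos_map \<pi> c) = c"
  by (cases c) auto

lemma headed_wpt: "headed (wpt c d pos)"
  by (simp add: wpt_def headed_def)

lemma tail_ren_wpt: "d \<in> {CL, CR} \<Longrightarrow> tail_ren (pos_map \<pi>) (wpt c d (CP k)) = wpt c d (CP (\<pi> k))"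
  by (auto simp: wpt_def)

definition edge :: "trm \<Rightarrow> trm \<Rightarrow> wiring" where
  "edge a b = {cls (a, b), cls (b, a)}"

lemma wordrep_edges:
  "wordrep W p = (\<Union>i\<in>{0..length W}.
     edge (wpt (letter W i) CL (CP (p ! i)))
          (wpt (letter W (Suc i)) CR (CP (p ! (if i = length W then 0 else Suc i)))))"
  unfolding wordrep_def edge_def Let_def ..

lemma headed_wiring_edge: "headed a \<Longrightarrow> headed b \<Longrightarrow> headed_wiring (edge a b)"
  unfolding headed_wiring_def edge_def by (auto dest: headed_cls)

lemma headed_wiring_wordrep: "headed_wiring (wordrep W p)"
  unfolding wordrep_edges headed_wiring_def
  using headed_wiring_edge[OF headed_wpt headed_wpt] unfolding headed_wiring_def by blast

lemma flow_map_edge: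
  "flow_map (pos_map \<pi>) ` edge (wpt c CL (CP k)) (wpt c' CR (CP k'))
     = edge (wpt c CL (CP (\<pi> k))) (wpt c' CR (CP (\<pi> k')))"
  unfolding edge_def by (simp add: flow_map_cls headed_wpt tail_ren_wpt)

lemma flow_map_wordrep:
  assumes "length p = length W + 1" and "map \<pi> p = q"
  shows "flow_map (pos_map \<pi>) ` wordrep W p = wordrep W q"
proof -
  have "\<pi> (p ! i) = q ! i" if "i \<le> length W" for i
    using assms that by auto
  then show ?thesis
    unfolding wordrep_edges image_UN by (intro SUP_cong refl) (simp add: flow_map_edge)
qed

lemma ex_bij_map:
  fixes p q :: "'a list"
  shows "distinct p \<Longrightarrow> distinct q \<Longrightarrow> length p = length q \<Longrightarrow> \<exists>\<pi>. bij \<pi> \<and> map \<pi> p = q"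
proof (induction p arbitrary: q)
  case Nil
  then have "q = []" by simp
  then show ?case by (metis bij_id list.map(1))
next
  case (Cons a p)
  then obtain b q' where q: "q = b # q'" by (cases q) auto
  with Cons obtain \<pi> where \<pi>: "bij \<pi>" "map \<pi> p = q'" by auto
  define \<pi>' where "\<pi>' = transpose b (\<pi> a) \<circ> \<pi>"
  have "\<pi>' x = \<pi> x" if "x \<in> set p" for x
  proof -
    have "\<pi> x \<noteq> b" using \<pi>(2) Cons.prems(2) q that by auto
    moreover have "\<pi> x \<noteq> \<pi> a" using Cons.prems(1) that bij_is_inj[OF \<pi>(1)] by (auto dest: injD)
    ultimately show ?thesis by (simp add: \<pi>'_def)
  qed
  then have "map \<pi>' p = q'" using \<pi>(2) by (metis map_eq_conv)
  moreover have "bij \<pi>'" using \<pi>(1) by (simp add: \<pi>'_def bij_comp)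
  ultimately show ?case using q by (auto simp: \<pi>'_def)
qed

lemma nilpotent_wordrep_perm:
  assumes Ob: "Ob \<in> Matr \<Sigma> Obs" and len: "length p = length W + 1"
    and \<pi>: "bij \<pi>" "map \<pi> p = q"
    and nil: "nilpotent (wprod Ob (wordrep W q))"
  shows "nilpotent (wprod Ob (wordrep W p))"
proof (rule nilpotent_transfer[where g = "pos_map \<pi>" and h = "pos_map (inv \<pi>)"])
  show "pos_map \<pi> (pos_map (inv \<pi>) c) = c" for c
    by (rule pos_map_inverse) (meson \<pi>(1) bij_inv_eq_iff)
  show "pos_map (inv \<pi>) (pos_map \<pi> c) = c" for c
    by (rule pos_map_inverse) (simp add: \<pi>(1) bij_is_inj)
  show "flow_map (pos_map \<pi>) ` Ob \<subseteq> Ob"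
    using Matr_flow_map_fixed[OF Ob pos_map_fix] by simp
  show "flow_map (pos_map \<pi>) ` wordrep W p \<subseteq> wordrep W q"
    using flow_map_wordrep[OF len \<pi>(2)] by simp
qed (use Ob nil Matr_headed headed_wiring_wordrep in auto)

theorem mainTheorem9:
  fixes \<Sigma> :: "const set" and W :: "const list" and p q :: "nat list" and Ob :: wiring
  assumes "Star \<notin> \<Sigma>" and "set W \<subseteq> \<Sigma>"
    and "length p = length W + 1" and "distinct p"
    and "length q = length W + 1" and "distinct q"
    and "Ob \<in> Matr \<Sigma> Obs"
  shows "nilpotent (wprod Ob (wordrep W p)) \<longleftrightarrow> nilpotent (wprod Ob (wordrep W q))"
proof -
  obtain \<pi> where \<pi>: "bij \<pi>" "map \<pi> p = q"
    using ex_bij_map assms(3-6) by fastforce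
  moreover have "bij (inv \<pi>)" "map (inv \<pi>) q = p"
    using \<pi> by (auto simp: bij_imp_bij_inv bij_is_inj)
  ultimately show ?thesis
    using nilpotent_wordrep_perm[OF assms(7) assms(3)] nilpotent_wordrep_perm[OF assms(7) assms(5)]
    by blast
qed

end
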